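(* Let $\mathbb{F}_2=\langle a\rangle\ast\langle b\rangle$ and let $f=f_A\ast f_B$ be a split quasimorphism with bounded factors $f_A:\langle a\rangle\to\mathbb{R}$, $f_B:\langle b\rangle\to\mathbb{R}$. For $n\in\mathbb{Z}\setminus\{0\}$ let $\tau_n$ be the automorphism $a\mapsto a$, $b\mapsto a^nb$. Then the following are equivalent: (i) $\tau_n.f=f$; (ii) $\tau_n.\widehat f=\widehat f$; (iii) $\tau_n.\omega_f=\omega_f$; (iv) the function $f_A$ is $|n|$-periodic and $f_B$ is identically zero. Furthermore, if $|n|\leq 2$ these conditions imply $f=0$.
   Context: $f_A,f_B$ are alternating ($f(x^{-1})=-f(x)$). Each non-trivial element of $\mathbb{F}_2$ has a unique normal form $a^{k_1}b^{l_1}\cdots a^{k_m}b^{l_m}$ with all exponents non-zero except possibly $k_1$ or $l_m$, and $f(1)=0$, $f(a^{k_1}b^{l_1}\cdots a^{k_m}b^{l_m})=f_A(a^{k_1})+f_B(b^{l_1})+\dots+f_A(a^{k_m})+f_B(b^{l_m})$ (with $f_A(1)=f_B(1)=0$). The action of automorphisms on functions is $\tau.f=f\circ\tau^{-1}$; $\widehat f(g)=\lim_{k\to\infty}f(g^k)/k$ is the homogenization; $\omega_f\in\mathrm{H}^2_\mathrm{b}(\mathbb{F}_2,\mathbb{R})$ is the bounded class of $\partial f(g,h)=f(g)+f(h)-f(gh)$, and $\tau.\omega_f=\omega_{\tau.f}$. $f_A$ is $|n|$-periodic means $f_A(a^{k+n})=f_A(a^k)$ for all $k\in\mathbb{Z}$.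 *)

theory Defs
  imports Complex_Main
begin

text \<open>A syllable (g,k) stands for a^k if g = False and b^k if g = True.
  A normal form is a list of syllables with non-zero exponents and
  alternating generators.\<close>

fun reduced :: "(bool \<times> int) list \<Rightarrow> bool" where
  "reduced [] = True"
| "reduced [(g,k)] = (k \<noteq> 0)"
| "reduced ((g,k) # (h,l) # r) = (k \<noteq> 0 \<and> g \<noteq> h \<and> reduced ((h,l) # r))"

fun cons_syl :: "bool \<times> int \<Rightarrow> (bool \<times> int) list \<Rightarrow> (bool \<times> int) list" where
  "cons_syl (g,k) [] = (if k = 0 then [] else [(g,k)])"
| "cons_syl (g,k) ((h,l) # r) =
     (if k = 0 then (h,l) # r
      else if g = h then (if k + l = 0 then r else (g, k + l) # r)
      else (g,k) # (h,l) # r)"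

lemma reduced_tl: "reduced (x # r) \<Longrightarrow> reduced r"
  by (cases x; cases r rule: reduced.cases) auto

lemma reduced_cons_syl: "reduced ws \<Longrightarrow> reduced (cons_syl s ws)"
proof (cases s)
  case (Pair g k)
  assume r: "reduced ws"
  show ?thesis
  proof (cases ws)
    case Nil then show ?thesis using Pair by simp
  next
    case (Cons x rest)
    obtain h l where x: "x = (h,l)" by (cases x)
    show ?thesis
    proof (cases rest)
      case Nil then show ?thesis using r Pair Cons x by auto
    next
      case (Cons y rest')
      obtain h' l' where y: "y = (h',l')" by (cases y)
      show ?thesis using r Pair \<open>ws = x # rest\<close> Cons x y
        by (auto dest: reduced_tl)
    qed
  qed
qed

definition mul_list :: "(bool \<times> int) list \<Rightarrow> (bool \<times> int) list \<Rightarrow> (bool \<times> int) list" where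
  "mul_list xs ys = foldr cons_syl xs ys"

lemma reduced_mul_list: "reduced ys \<Longrightarrow> reduced (mul_list xs ys)"
  unfolding mul_list_def by (induction xs) (auto intro: reduced_cons_syl)

definition inv_list :: "(bool \<times> int) list \<Rightarrow> (bool \<times> int) list" where
  "inv_list xs = mul_list (rev (map (\<lambda>(g,k). (g, -k)) xs)) []"

typedef fg2 = "{ws. reduced ws}"
  by (rule exI[of _ "[]"]) simp

setup_lifting type_definition_fg2

lift_definition one_fg2 :: fg2 is "[]" by simp

lift_definition mul_fg2 :: "fg2 \<Rightarrow> fg2 \<Rightarrow> fg2" is mul_list
  by (rule reduced_mul_list)

lift_definition inv_fg2 :: "fg2 \<Rightarrow> fg2" is inv_list
  unfolding inv_list_def by (rule reduced_mul_list) simp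

lift_definition apow :: "int \<Rightarrow> fg2" is "\<lambda>k. cons_syl (False, k) []"
  by (rule reduced_cons_syl) simp

lift_definition bpow :: "int \<Rightarrow> fg2" is "\<lambda>k. cons_syl (True, k) []"
  by (rule reduced_cons_syl) simp

definition npow :: "fg2 \<Rightarrow> nat \<Rightarrow> fg2" where
  "npow g k = (mul_fg2 g ^^ k) one_fg2"

definition ipow :: "fg2 \<Rightarrow> int \<Rightarrow> fg2" where
  "ipow g k = (if k \<ge> 0 then npow g (nat k) else npow (inv_fg2 g) (nat (- k)))"

text \<open>The automorphism tau_n : a \<mapsto> a, b \<mapsto> a^n b, defined as the
  homomorphic extension to normal forms (a^{k1} b^{l1} ... \<mapsto> a^{k1} (a^n b)^{l1} ...).\<close>
definition syl_img :: "int \<Rightarrow> bool \<times> int \<Rightarrow> fg2" where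
  "syl_img n s = (case s of (False, k) \<Rightarrow> apow k
                           | (True, l) \<Rightarrow> ipow (mul_fg2 (apow n) (bpow 1)) l)"

definition tau :: "int \<Rightarrow> fg2 \<Rightarrow> fg2" where
  "tau n w = foldr (\<lambda>s acc. mul_fg2 (syl_img n s) acc) (Rep_fg2 w) one_fg2"

definition act_tau :: "int \<Rightarrow> (fg2 \<Rightarrow> real) \<Rightarrow> fg2 \<Rightarrow> real" where
  "act_tau n f = f \<circ> inv (tau n)"

text \<open>fA k stands for f_A(a^k), fB k for f_B(b^k).\<close>
definition alternating :: "(int \<Rightarrow> real) \<Rightarrow> bool" where
  "alternating h \<longleftrightarrow> (\<forall>k. h (- k) = - h k)"

definition split_qm :: "(int \<Rightarrow> real) \<Rightarrow> (int \<Rightarrow> real) \<Rightarrow> fg2 \<Rightarrow> real" where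
  "split_qm fA fB w = (\<Sum>(g,k)\<leftarrow>Rep_fg2 w. if g then fB k else fA k)"

definition homogenization :: "(fg2 \<Rightarrow> real) \<Rightarrow> fg2 \<Rightarrow> real" where
  "homogenization f g = lim (\<lambda>k::nat. f (npow g k) / real k)"

definition coboundary :: "(fg2 \<Rightarrow> real) \<Rightarrow> fg2 \<Rightarrow> fg2 \<Rightarrow> real" where
  "coboundary f g h = f g + f h - f (mul_fg2 g h)"

text \<open>omega_f = omega_f' in H^2_b(F_2,R): the bounded 2-cocycles differ by the
  coboundary of a bounded 1-cochain.\<close>
definition same_bounded_class :: "(fg2 \<Rightarrow> real) \<Rightarrow> (fg2 \<Rightarrow> real) \<Rightarrow> bool" where
  "same_bounded_class f f' \<longleftrightarrow>
     (\<exists>u :: fg2 \<Rightarrow> real. (\<exists>C. \<forall>x. \<bar>u x\<bar> \<le> C) \<and>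
        (\<forall>g h. coboundary f g h - coboundary f' g h = coboundary u g h))"

definition periodic :: "(int \<Rightarrow> real) \<Rightarrow> nat \<Rightarrow> bool" where
  "periodic h p \<longleftrightarrow> (\<forall>k. h (k + int p) = h k)"

end

theory Submission
  imports Defs "HOL-Algebra.Group"
begin

text \<open>If \<open>f\<^sub>B = 0\<close> and \<open>f\<^sub>A\<close> is
  \<open>|n|\<close>-periodic, the normal form of \<open>\<tau>\<^sub>n(w)\<close> arises from that of \<open>w\<close> by shifting each
  \<open>a\<close>-exponent by a multiple of \<open>n\<close> and inserting syllables \<open>a\<^sup>\<plusminus>\<^sup>n\<close>, so \<open>f\<close> is unchanged;
  this is tracked syllable by syllable through the leading syllables of \<open>\<tau>\<^sub>n(w)\<close>.
  Conversely, (i) implies (ii) and (iii), and each of (ii), (iii) implies that the slopes of \<open>f\<close>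
  along the powers of \<open>w\<close> and of \<open>\<tau>\<^sub>n(w)\<close> differ by \<open>E(w)\<close> for a homomorphism
  \<open>E : F\<^sub>2 \<rightarrow> \<real>\<close>. On \<open>b\<close>, \<open>a\<^sup>-\<^sup>n b\<close> and \<open>a\<^sup>k b\<^sup>j\<^sup>+\<^sup>1\<close>, whose powers have explicit normal
  forms, this gives \<open>f\<^sub>B(1) = 0\<close> and \<open>f\<^sub>A(k + n) = f\<^sub>A(k) + f\<^sub>A(n)\<close>; boundedness forces
  \<open>f\<^sub>A(n) = 0\<close>, whence periodicity and then \<open>f\<^sub>B = 0\<close>. For \<open>|n| \<le> 2\<close> an alternating
  function of period 1 or 2 vanishes.\<close>

section \<open>Normal forms\<close>

lemma reduced_Rep_fg2: "reduced (Rep_fg2 x)"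
  using Rep_fg2 by simp

lemma cons_syl_zero [simp]: "cons_syl (g, 0) ws = ws"
  by (cases ws rule: reduced.cases) auto

lemma cons_syl_reduced: "reduced (s # ws) \<Longrightarrow> cons_syl s ws = s # ws"
  by (cases s; cases ws rule: reduced.cases) auto

lemma cons_syl_cons_syl:
  "reduced ws \<Longrightarrow> cons_syl (g, k) (cons_syl (g, l) ws) = cons_syl (g, k + l) ws"
  by (cases ws rule: reduced.cases) auto

lemma mul_list_Nil [simp]: "mul_list [] ys = ys"
  by (simp add: mul_list_def)

lemma mul_list_Cons [simp]: "mul_list (x # xs) ys = cons_syl x (mul_list xs ys)"
  by (simp add: mul_list_def)

lemma mul_list_append: "mul_list (xs @ ys) zs = mul_list xs (mul_list ys zs)"
  by (simp add: mul_list_def)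

lemma mul_list_cons_syl:
  assumes "reduced ys" "reduced zs"
  shows "mul_list (cons_syl s ys) zs = cons_syl s (mul_list ys zs)"
proof -
  have "reduced (mul_list r zs)" for r
    using assms(2) by (rule reduced_mul_list)
  with assms show ?thesis
    by (cases s; cases ys rule: reduced.cases) (auto simp: cons_syl_cons_syl reduced_cons_syl)
qed

lemma mul_list_assoc:
  "reduced ys \<Longrightarrow> reduced zs \<Longrightarrow> mul_list (mul_list xs ys) zs = mul_list xs (mul_list ys zs)"
  by (induction xs) (auto simp: mul_list_cons_syl reduced_mul_list)

lemma mul_list_reduced: "reduced (xs @ ys) \<Longrightarrow> mul_list xs ys = xs @ ys"
proof (induction xs)
  case (Cons x xs)
  then have "reduced (xs @ ys)"
    by (auto dest: reduced_tl)
  with Cons show ?case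
    by (simp add: cons_syl_reduced)
qed simp

lemma mul_list_Nil_right: "reduced xs \<Longrightarrow> mul_list xs [] = xs"
  using mul_list_reduced[of xs "[]"] by simp

definition syl_inv :: "bool \<times> int \<Rightarrow> bool \<times> int" where
  "syl_inv = (\<lambda>(g, k). (g, - k))"

lemma mul_list_cancel: "reduced zs \<Longrightarrow> mul_list (rev (map syl_inv ys)) (mul_list ys zs) = zs"
proof (induction ys)
  case (Cons y ys)
  obtain g k where y: "y = (g, k)"
    by (cases y)
  have "reduced (mul_list ys zs)"
    using Cons.prems by (rule reduced_mul_list)
  then show ?case
    using Cons by (simp add: y syl_inv_def mul_list_append cons_syl_cons_syl)
qed simp

lemma mul_list_inv_list_left: "reduced xs \<Longrightarrow> mul_list (inv_list xs) xs = []"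
  using mul_list_cancel[of "[]" xs] mul_list_assoc[of "[]" xs "rev (map syl_inv xs)"]
  by (simp add: inv_list_def syl_inv_def [symmetric] mul_list_Nil_right)

section \<open>The group structure\<close>

lemma Rep_mul_fg2: "Rep_fg2 (mul_fg2 x y) = mul_list (Rep_fg2 x) (Rep_fg2 y)"
  by (rule mul_fg2.rep_eq)

lemma mul_fg2_inv_left: "mul_fg2 (inv_fg2 x) x = one_fg2"
  by (simp add: Rep_fg2_inject [symmetric] Rep_mul_fg2 one_fg2.rep_eq inv_fg2.rep_eq
      mul_list_inv_list_left reduced_Rep_fg2)

definition FG2 :: "fg2 monoid" where
  "FG2 = \<lparr>carrier = UNIV, mult = mul_fg2, one = one_fg2\<rparr>"

lemma FG2_simps [simp]:
  "carrier FG2 = UNIV" "x \<otimes>\<^bsub>FG2\<^esub> y = mul_fg2 x y" "\<one>\<^bsub>FG2\<^esub> = one_fg2"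
  by (simp_all add: FG2_def)

lemma group_FG2: "group FG2"
proof (rule groupI)
  fix x y z
  show "x \<otimes>\<^bsub>FG2\<^esub> y \<otimes>\<^bsub>FG2\<^esub> z = x \<otimes>\<^bsub>FG2\<^esub> (y \<otimes>\<^bsub>FG2\<^esub> z)"
    by (simp add: Rep_fg2_inject [symmetric] Rep_mul_fg2 mul_list_assoc reduced_Rep_fg2)
  show "\<one>\<^bsub>FG2\<^esub> \<otimes>\<^bsub>FG2\<^esub> x = x"
    by (simp add: Rep_fg2_inject [symmetric] Rep_mul_fg2 one_fg2.rep_eq)
  show "\<exists>y \<in> carrier FG2. y \<otimes>\<^bsub>FG2\<^esub> x = \<one>\<^bsub>FG2\<^esub>"
    using mul_fg2_inv_left by auto
qed simp_all

interpretation FG2: group FG2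
  by (rule group_FG2)

lemma mul_fg2_assoc: "mul_fg2 (mul_fg2 x y) z = mul_fg2 x (mul_fg2 y z)"
  using FG2.m_assoc by simp

lemma mul_fg2_one_left [simp]: "mul_fg2 one_fg2 x = x"
  using FG2.l_one by simp

lemma mul_fg2_one_right [simp]: "mul_fg2 x one_fg2 = x"
  using FG2.r_one by simp

lemma inv_FG2: "inv\<^bsub>FG2\<^esub> x = inv_fg2 x"
  by (rule FG2.inv_equality) (simp_all add: mul_fg2_inv_left)

lemma npow_eq_nat_pow: "npow g k = g [^]\<^bsub>FG2\<^esub> k"
  by (induction k) (simp_all add: npow_def FG2.nat_pow_Suc2 del: nat_pow_Suc FG2.nat_pow_Suc)

lemma ipow_eq_int_pow: "ipow g k = g [^]\<^bsub>FG2\<^esub> k"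
proof -
  have "npow (inv_fg2 g) m = inv\<^bsub>FG2\<^esub> (g [^]\<^bsub>FG2\<^esub> m)" for m
    by (simp add: npow_eq_nat_pow FG2.nat_pow_inv flip: inv_FG2)
  then show ?thesis
    unfolding ipow_def int_pow_def2[of FG2 g k] by (simp add: npow_eq_nat_pow)
qed

lemma ipow_add: "ipow g (k + l) = mul_fg2 (ipow g k) (ipow g l)"
  unfolding ipow_eq_int_pow using FG2.int_pow_mult[of g k l] by simp

lemma apow_add: "apow (k + l) = mul_fg2 (apow k) (apow l)"
  by (simp add: Rep_fg2_inject [symmetric] Rep_mul_fg2 apow.rep_eq cons_syl_cons_syl)

lemma bpow_add: "bpow (k + l) = mul_fg2 (bpow k) (bpow l)"
  by (simp add: Rep_fg2_inject [symmetric] Rep_mul_fg2 bpow.rep_eq cons_syl_cons_syl)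

lemma apow_zero [simp]: "apow 0 = one_fg2"
  by (simp add: Rep_fg2_inject [symmetric] apow.rep_eq one_fg2.rep_eq)

lemma ipow_one [simp]: "ipow g 1 = g"
  by (simp add: ipow_def npow_def)

lemma npow_additive:
  assumes "\<And>k l. \<phi> (k + l) = mul_fg2 (\<phi> k) (\<phi> l)"
  shows "npow (\<phi> j) m = \<phi> (int m * j)"
proof (induction m)
  case 0
  show ?case
    using assms[of 0 0] FG2.l_cancel_one[of "\<phi> 0" "\<phi> 0"] by (simp add: npow_def)
next
  case (Suc m)
  then show ?case
    by (simp add: npow_def assms [symmetric] algebra_simps)
qed

lemma additive_eq_ipow:
  assumes "\<And>k l. \<phi> (k + l) = mul_fg2 (\<phi> k) (\<phi> l)"
  shows "\<phi> k = ipow (\<phi> 1) k"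
proof -
  have "\<phi> 0 = one_fg2"
    using npow_additive[OF assms, of _ 0] by (simp add: npow_def)
  then have "mul_fg2 (\<phi> (- 1)) (\<phi> 1) = one_fg2"
    by (simp flip: assms)
  then have "inv_fg2 (\<phi> 1) = \<phi> (- 1)"
    using FG2.inv_equality[of "\<phi> (- 1)" "\<phi> 1"] by (simp add: inv_FG2)
  then show ?thesis
    by (simp add: ipow_def npow_additive[OF assms])
qed

lemma apow_eq_ipow: "apow k = ipow (apow 1) k"
  by (rule additive_eq_ipow) (rule apow_add)

lemma bpow_eq_ipow: "bpow k = ipow (bpow 1) k"
  by (rule additive_eq_ipow) (rule bpow_add)

section \<open>The automorphism \<open>\<tau>\<^sub>n\<close>\<close>

definition syl_eval :: "(bool \<times> int \<Rightarrow> fg2) \<Rightarrow> (bool \<times> int) list \<Rightarrow> fg2" where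
  "syl_eval S xs = foldr (\<lambda>s acc. mul_fg2 (S s) acc) xs one_fg2"

lemma syl_eval_Nil [simp]: "syl_eval S [] = one_fg2"
  by (simp add: syl_eval_def)

lemma syl_eval_Cons [simp]: "syl_eval S (s # xs) = mul_fg2 (S s) (syl_eval S xs)"
  by (simp add: syl_eval_def)

lemma syl_eval_mul_list:
  assumes S: "\<And>g k l. S (g, k + l) = mul_fg2 (S (g, k)) (S (g, l))"
  shows "syl_eval S (mul_list xs ys) = mul_fg2 (syl_eval S xs) (syl_eval S ys)"
proof -
  have S0: "S (g, 0) = one_fg2" for g
    using S[of g 0 0] FG2.l_cancel_one[of "S (g, 0)" "S (g, 0)"] by simp
  have S_merge: "mul_fg2 (S (g, k)) (mul_fg2 (S (g, l)) z) = mul_fg2 (S (g, k + l)) z" for g k l z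
    by (simp add: S mul_fg2_assoc)
  have "syl_eval S (cons_syl s zs) = mul_fg2 (S s) (syl_eval S zs)" for s zs
    by (cases s; cases zs rule: reduced.cases) (auto simp: S0 S_merge S [symmetric])
  then show ?thesis
    by (induction xs) (simp_all add: mul_fg2_assoc)
qed

definition gen_pow :: "bool \<times> int \<Rightarrow> fg2" where
  "gen_pow = (\<lambda>(g, k). if g then bpow k else apow k)"

lemma syl_eval_gen_pow: "syl_eval gen_pow (Rep_fg2 x) = x"
proof -
  have "reduced ws \<Longrightarrow> syl_eval gen_pow ws = Abs_fg2 ws" for ws
  proof (induction ws)
    case Nil
    then show ?case
      by (simp add: one_fg2_def)
  next
    case (Cons s ws)
    obtain g k where s: "s = (g, k)"
      by (cases s)
    from Cons.prems have "reduced ws"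
      by (rule reduced_tl)
    moreover have "k \<noteq> 0"
      using Cons.prems s by (cases ws rule: reduced.cases) auto
    ultimately have "Rep_fg2 (mul_fg2 (gen_pow s) (Abs_fg2 ws)) = s # ws"
      using cons_syl_reduced[OF Cons.prems]
      by (cases g) (simp_all add: s Rep_mul_fg2 gen_pow_def apow.rep_eq bpow.rep_eq Abs_fg2_inverse)
    then show ?case
      using Cons \<open>reduced ws\<close> by (metis Rep_fg2_inverse syl_eval_Cons)
  qed
  then show ?thesis
    by (simp add: reduced_Rep_fg2 Rep_fg2_inverse)
qed

lemma hom_FG2_eqI:
  assumes h1: "h1 \<in> hom FG2 FG2" and h2: "h2 \<in> hom FG2 FG2"
    and a: "h1 (apow 1) = h2 (apow 1)" and b: "h1 (bpow 1) = h2 (bpow 1)"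
  shows "h1 x = h2 x"
proof -
  have hom_eval: "h (syl_eval S xs) = syl_eval (h \<circ> S) xs" if "h \<in> hom FG2 FG2" for h S xs
  proof -
    interpret group_hom FG2 FG2 h
      using that by (simp add: group_hom_def group_hom_axioms_def group_FG2)
    show ?thesis
      using hom_one hom_mult by (induction xs) simp_all
  qed
  have hom_ipow: "h (ipow g k) = ipow (h g) k" if "h \<in> hom FG2 FG2" for h g k
    using hom_int_pow[OF that _ group_FG2 group_FG2] by (simp add: ipow_eq_int_pow)
  have "h1 (apow k) = h2 (apow k)" "h1 (bpow k) = h2 (bpow k)" for k
    by (metis apow_eq_ipow bpow_eq_ipow hom_ipow h1 h2 a b)+
  then have gen: "h1 \<circ> gen_pow = h2 \<circ> gen_pow"
    by (auto simp: gen_pow_def)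
  have "h1 x = syl_eval (h1 \<circ> gen_pow) (Rep_fg2 x)"
    using hom_eval[OF h1, of gen_pow "Rep_fg2 x"] by (simp only: syl_eval_gen_pow)
  also have "\<dots> = h2 x"
    using hom_eval[OF h2, of gen_pow "Rep_fg2 x"] by (simp only: gen syl_eval_gen_pow)
  finally show ?thesis .
qed

lemma syl_img_add: "syl_img n (g, k + l) = mul_fg2 (syl_img n (g, k)) (syl_img n (g, l))"
  by (cases g) (simp_all add: syl_img_def apow_add ipow_add)

lemma tau_eq_syl_eval: "tau n w = syl_eval (syl_img n) (Rep_fg2 w)"
  by (simp add: tau_def syl_eval_def)

lemma tau_mul: "tau n (mul_fg2 x y) = mul_fg2 (tau n x) (tau n y)"
  by (simp add: tau_eq_syl_eval Rep_mul_fg2 syl_eval_mul_list syl_img_add)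

lemma tau_hom: "tau n \<in> hom FG2 FG2"
  by (rule homI) (simp_all add: tau_mul)

lemma tau_npow: "tau n (npow g m) = npow (tau n g) m"
  using hom_nat_pow[OF tau_hom _ group_FG2 group_FG2] by (simp add: npow_eq_nat_pow)

lemma tau_apow [simp]: "tau n (apow k) = apow k"
  by (simp add: tau_eq_syl_eval apow.rep_eq syl_img_def)

lemma tau_bpow [simp]: "tau n (bpow k) = ipow (mul_fg2 (apow n) (bpow 1)) k"
  by (cases "k = 0") (simp_all add: tau_eq_syl_eval bpow.rep_eq syl_img_def ipow_def npow_def)

lemma tau_inverse: "tau (- n) (tau n x) = x"
proof -
  have "tau (- n) \<circ> tau n \<in> hom FG2 FG2"
    by (rule homI) (simp_all add: tau_mul)
  moreover have "id \<in> hom FG2 FG2"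
    by (rule homI) simp_all
  moreover have "tau (- n) (tau n (bpow 1)) = bpow 1"
    by (simp add: tau_mul flip: mul_fg2_assoc apow_add)
  ultimately show ?thesis
    using hom_FG2_eqI[of "tau (- n) \<circ> tau n" id] by simp
qed

lemma act_tau_eq: "act_tau n f = f \<circ> tau (- n)"
  unfolding act_tau_def using inv_equality[of "tau (- n)" "tau n"] tau_inverse[of n] tau_inverse[of "- n"]
  by simp

lemma act_tau_fixed_iff: "act_tau n f = f \<longleftrightarrow> (\<forall>x. f (tau n x) = f x)"
proof
  assume "act_tau n f = f"
  then have "f (tau (- n) (tau n x)) = f (tau n x)" for x
    by (metis act_tau_eq comp_apply)
  then show "\<forall>x. f (tau n x) = f x"
    by (simp add: tau_inverse)
next
  assume "\<forall>x. f (tau n x) = f x"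
  then have "f (tau n (tau (- n) x)) = f (tau (- n) x)" for x
    by blast
  then show "act_tau n f = f"
    using tau_inverse[of "- n"] by (simp add: act_tau_eq fun_eq_iff)
qed

section \<open>Invariance for periodic \<open>f\<^sub>A\<close> and vanishing \<open>f\<^sub>B\<close>\<close>

definition syl_sum :: "(int \<Rightarrow> real) \<Rightarrow> (int \<Rightarrow> real) \<Rightarrow> (bool \<times> int) list \<Rightarrow> real" where
  "syl_sum fA fB xs = (\<Sum>(g, k)\<leftarrow>xs. if g then fB k else fA k)"

lemma syl_sum_Nil [simp]: "syl_sum fA fB [] = 0"
  by (simp add: syl_sum_def)

lemma syl_sum_Cons [simp]:
  "syl_sum fA fB ((g, k) # xs) = (if g then fB k else fA k) + syl_sum fA fB xs"
  by (simp add: syl_sum_def)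

lemma syl_sum_append: "syl_sum fA fB (xs @ ys) = syl_sum fA fB xs + syl_sum fA fB ys"
  by (simp add: syl_sum_def)

lemma split_qm_eq_syl_sum: "split_qm fA fB w = syl_sum fA fB (Rep_fg2 w)"
  by (simp add: split_qm_def syl_sum_def)

lemma Rep_npow_mul_list:
  "reduced R \<Longrightarrow> mul_list (Rep_fg2 (npow c j)) R = (mul_list (Rep_fg2 c) ^^ j) R"
  by (induction j) (simp_all add: npow_def Rep_mul_fg2 mul_list_assoc reduced_Rep_fg2 one_fg2.rep_eq)

lemma funpow_Suc_invariant:
  assumes "\<And>x. P x \<Longrightarrow> Q (f x)" and "\<And>x. Q x \<Longrightarrow> P x" and "P x"
  shows "Q ((f ^^ Suc j) x)"
  by (induction j) (simp_all add: assms)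

definition pos_b_head :: "(bool \<times> int) list \<Rightarrow> bool" where
  "pos_b_head R \<longleftrightarrow> (\<exists>p R'. 0 < p \<and> R = (True, p) # R')"

definition neg_b_head :: "(bool \<times> int) list \<Rightarrow> bool" where
  "neg_b_head R \<longleftrightarrow> (\<exists>q R'. q < 0 \<and> R = (True, q) # R')"

context
  fixes fA :: "int \<Rightarrow> real" and n :: int
  assumes n_nonzero: "n \<noteq> 0"
    and fA_period: "\<And>k. fA (k + n) = fA k"
    and fA_zero: "fA 0 = 0"
begin

abbreviation sum_a :: "(bool \<times> int) list \<Rightarrow> real" where
  "sum_a \<equiv> syl_sum fA (\<lambda>_. 0)"

abbreviation ab_syls :: "(bool \<times> int) list" where
  "ab_syls \<equiv> [(False, n), (True, 1)]"

abbreviation ab_inv_syls :: "(bool \<times> int) list" where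
  "ab_inv_syls \<equiv> [(True, - 1), (False, - n)]"

lemma fA_n: "fA n = 0"
  using fA_period[of 0] fA_zero by simp

lemma fA_minus_n: "fA (- n) = 0"
  using fA_period[of "- n"] fA_zero by simp

lemma fA_add_n [simp]: "fA (n + k) = fA k"
  using fA_period[of k] by (simp add: add.commute)

lemma fA_add_minus_n [simp]: "fA (- n + k) = fA k"
  using fA_period[of "- n + k"] by simp

lemma fA_diff_n [simp]: "fA (k - n) = fA k"
  using fA_period[of "k - n"] by simp

lemma fA_cancel_n: "n + k = 0 \<Longrightarrow> fA k = 0" "- n + k = 0 \<Longrightarrow> fA k = 0"
  using fA_add_n[of k] fA_add_minus_n[of k] fA_zero by simp_all

lemma sum_a_cons_syl_b: "sum_a (cons_syl (True, l) R) = sum_a R"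
  by (cases R rule: reduced.cases) auto

lemma sum_a_cons_syl_n: "sum_a (cons_syl (False, n) R) = sum_a R"
  using fA_n by (cases R rule: reduced.cases) (auto simp: fA_cancel_n)

lemma sum_a_cons_syl_minus_n: "sum_a (cons_syl (False, - n) R) = sum_a R"
  using fA_minus_n by (cases R rule: reduced.cases) (auto simp: fA_cancel_n)

lemma sum_a_funpow:
  assumes "\<And>R. sum_a (F R) = sum_a R"
  shows "sum_a ((F ^^ j) R) = sum_a R"
  by (induction j) (simp_all add: assms)

lemma mul_list_P_shape:
  "\<not> neg_b_head R \<Longrightarrow> \<exists>R'. mul_list ab_syls R = (False, n) # R' \<and> pos_b_head R'"
  using n_nonzero by (cases R rule: reduced.cases) (auto simp: neg_b_head_def pos_b_head_def)

lemma mul_list_Q_shape: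
  "\<not> pos_b_head (cons_syl (False, - n) R) \<Longrightarrow> neg_b_head (mul_list ab_inv_syls R)"
  by (cases "cons_syl (False, - n) R" rule: reduced.cases) (auto simp: neg_b_head_def pos_b_head_def)

lemma funpow_mul_list_P_shape:
  "\<not> neg_b_head R \<Longrightarrow>
   \<exists>R'. (mul_list ab_syls ^^ Suc j) R = (False, n) # R' \<and> pos_b_head R'"
  using mul_list_P_shape
  by (intro funpow_Suc_invariant[where P = "\<lambda>R. \<not> neg_b_head R"
        and Q = "\<lambda>R. \<exists>R'. R = (False, n) # R' \<and> pos_b_head R'"
        and f = "mul_list ab_syls"])
    (auto simp: neg_b_head_def simp del: mul_list_Cons)

lemma funpow_mul_list_Q_shape:
  "\<not> pos_b_head (cons_syl (False, - n) R) \<Longrightarrow>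
   neg_b_head ((mul_list ab_inv_syls ^^ Suc j) R)"
  using mul_list_Q_shape n_nonzero
  by (intro funpow_Suc_invariant[where P = "\<lambda>R. \<not> pos_b_head (cons_syl (False, - n) R)"
        and Q = neg_b_head and f = "mul_list ab_inv_syls"])
    (auto simp: neg_b_head_def pos_b_head_def simp del: mul_list_Cons)

lemma sum_a_funpow_mul_list:
  "sum_a ((mul_list ab_syls ^^ j) R) = sum_a R"
  "sum_a ((mul_list ab_inv_syls ^^ j) R) = sum_a R"
  by (simp_all add: sum_a_funpow sum_a_cons_syl_b sum_a_cons_syl_n sum_a_cons_syl_minus_n)

lemma Rep_syl_img_b_mul_list:
  assumes "reduced R"
  shows "mul_list (Rep_fg2 (syl_img n (True, l))) R =
    (if 0 \<le> l then (mul_list ab_syls ^^ nat l) R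
     else (mul_list ab_inv_syls ^^ nat (- l)) R)"
proof -
  have "Rep_fg2 (mul_fg2 (apow n) (bpow 1)) = ab_syls"
    using n_nonzero by (simp add: Rep_mul_fg2 apow.rep_eq bpow.rep_eq)
  moreover have "Rep_fg2 (inv_fg2 (mul_fg2 (apow n) (bpow 1))) = ab_inv_syls"
    using calculation n_nonzero by (simp add: inv_fg2.rep_eq inv_list_def)
  ultimately show ?thesis
    unfolding syl_img_def ipow_def using Rep_npow_mul_list[OF assms] by (simp del: mul_list_Cons)
qed

text \<open>Invariant of the computation of \<open>\<tau>\<^sub>n(w)\<close> from the last syllable of the normal form
  \<open>ws\<close> of \<open>w\<close> to the first: the sum is preserved, and the leading syllables of the partial
  result \<open>R\<close> guarantee that multiplying by the image of the preceding syllable never cascades.\<close>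

definition tau_shape :: "(bool \<times> int) list \<Rightarrow> (bool \<times> int) list \<Rightarrow> bool" where
  "tau_shape ws R \<longleftrightarrow> sum_a R = sum_a ws \<and>
     (case ws of
        [] \<Rightarrow> R = []
      | (True, l) # _ \<Rightarrow>
          (0 < l \<longrightarrow> (\<exists>R'. R = (False, n) # R' \<and> pos_b_head R')) \<and> (l < 0 \<longrightarrow> neg_b_head R)
      | (False, _) # _ \<Rightarrow> \<not> neg_b_head R \<and> \<not> pos_b_head (cons_syl (False, - n) R))"

lemma tau_shape_b_step:
  assumes "reduced R" and "tau_shape ws R" and "ws = [] \<or> (\<exists>k ws'. ws = (False, k) # ws')"
  shows "tau_shape ((True, l) # ws) (mul_list (Rep_fg2 (syl_img n (True, l))) R)"
proof -
  have R: "\<not> neg_b_head R" "\<not> pos_b_head (cons_syl (False, - n) R)" "sum_a R = sum_a ws"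
    using assms(2,3) n_nonzero by (auto simp: tau_shape_def neg_b_head_def pos_b_head_def)
  show ?thesis
  proof (cases "0 < l")
    case True
    then have "nat l = Suc (nat l - 1)"
      by (simp add: Suc_diff_1)
    then have "\<exists>R'. (mul_list ab_syls ^^ nat l) R = (False, n) # R' \<and> pos_b_head R'"
      using funpow_mul_list_P_shape[OF R(1), of "nat l - 1"] by (simp only:)
    then show ?thesis
      using True R(3) sum_a_funpow_mul_list(1)[of "nat l" R]
      by (simp add: tau_shape_def Rep_syl_img_b_mul_list[OF assms(1)])
  next
    case False
    then have "l \<le> 0"
      by simp
    have "neg_b_head ((mul_list ab_inv_syls ^^ nat (- l)) R)" if "l \<noteq> 0"
    proof -
      have "nat (- l) = Suc (nat (- l) - 1)"
        using \<open>l \<le> 0\<close> that by (simp add: Suc_diff_1)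
      then show ?thesis
        using funpow_mul_list_Q_shape[OF R(2), of "nat (- l) - 1"] by (simp only:)
    qed
    then show ?thesis
      using False R(3) sum_a_funpow_mul_list(2)[of "nat (- l)" R]
      by (simp add: tau_shape_def Rep_syl_img_b_mul_list[OF assms(1)])
  qed
qed

lemma tau_shape_a_step:
  assumes "reduced R" and "tau_shape ws R" and "ws = [] \<or> (\<exists>m ws'. ws = (True, m) # ws' \<and> m \<noteq> 0)"
    and "l \<noteq> 0"
  shows "tau_shape ((False, l) # ws) (cons_syl (False, l) R)"
proof -
  have "sum_a R = sum_a ws"
    and "R = [] \<or> (\<exists>R'. R = (False, n) # R' \<and> pos_b_head R') \<or> neg_b_head R"
    using assms(2,3) by (auto simp: tau_shape_def)
  then have "sum_a (cons_syl (False, l) R) = fA l + sum_a R \<and>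
      \<not> neg_b_head (cons_syl (False, l) R) \<and> \<not> pos_b_head (cons_syl (False, - n + l) R)"
  proof (elim disjE exE conjE)
    assume "R = []"
    then show ?thesis
      using \<open>l \<noteq> 0\<close> by (simp add: neg_b_head_def pos_b_head_def)
  next
    fix R'
    assume "R = (False, n) # R'" "pos_b_head R'"
    then show ?thesis
      using \<open>l \<noteq> 0\<close> fA_n fA_period[of n]
      by (auto simp: neg_b_head_def pos_b_head_def fA_cancel_n fA_period)
  next
    assume "neg_b_head R"
    then show ?thesis
      using \<open>l \<noteq> 0\<close> by (auto simp: neg_b_head_def pos_b_head_def split: if_splits)
  qed
  with \<open>sum_a R = sum_a ws\<close> show ?thesis
    by (simp add: tau_shape_def cons_syl_cons_syl \<open>reduced R\<close>)
qed

lemma tau_shape_syl_eval: "reduced ws \<Longrightarrow> tau_shape ws (Rep_fg2 (syl_eval (syl_img n) ws))"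
proof (induction ws)
  case Nil
  then show ?case
    by (simp add: tau_shape_def one_fg2.rep_eq)
next
  case (Cons s ws)
  obtain g l where s: "s = (g, l)"
    by (cases s)
  have "reduced ws"
    using Cons.prems by (rule reduced_tl)
  have "l \<noteq> 0"
    using Cons.prems s by (cases ws rule: reduced.cases) auto
  let ?R = "Rep_fg2 (syl_eval (syl_img n) ws)"
  have IH: "tau_shape ws ?R"
    using Cons.IH \<open>reduced ws\<close> .
  have Rep_eval: "Rep_fg2 (syl_eval (syl_img n) (s # ws)) = mul_list (Rep_fg2 (syl_img n s)) ?R"
    by (simp add: Rep_mul_fg2)
  show ?case
  proof (cases g)
    case True
    have "ws = [] \<or> (\<exists>k ws'. ws = (False, k) # ws')"
      using Cons.prems s True by (cases ws rule: reduced.cases) auto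
    then have "tau_shape (s # ws) (mul_list (Rep_fg2 (syl_img n s)) ?R)"
      using tau_shape_b_step[OF reduced_Rep_fg2 IH] by (simp only: s True)
    then show ?thesis
      by (simp only: Rep_eval)
  next
    case False
    have "ws = [] \<or> (\<exists>m ws'. ws = (True, m) # ws' \<and> m \<noteq> 0)"
      using Cons.prems s False by (cases ws rule: reduced.cases) auto
    then have "tau_shape (s # ws) (cons_syl (False, l) ?R)"
      using tau_shape_a_step[OF reduced_Rep_fg2 IH _ \<open>l \<noteq> 0\<close>] False by (simp only: s)
    moreover have "mul_list (Rep_fg2 (syl_img n s)) ?R = cons_syl (False, l) ?R"
      using False \<open>l \<noteq> 0\<close> by (simp add: s syl_img_def apow.rep_eq)
    ultimately show ?thesis
      by (simp only: Rep_eval)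
  qed
qed

lemma split_qm_tau: "split_qm fA (\<lambda>_. 0) (tau n x) = split_qm fA (\<lambda>_. 0) x"
  using tau_shape_syl_eval[OF reduced_Rep_fg2, of x]
  by (simp add: split_qm_eq_syl_sum tau_eq_syl_eval tau_shape_def)

end

section \<open>Slopes along powers\<close>

definition has_slope :: "(fg2 \<Rightarrow> real) \<Rightarrow> fg2 \<Rightarrow> real \<Rightarrow> bool" where
  "has_slope f w A \<longleftrightarrow> (\<exists>C. \<forall>m. \<bar>f (npow w m) - real m * A\<bar> \<le> C)"

lemma bounded_multiples_eq_0:
  fixes x C :: real
  assumes "\<And>m::nat. \<bar>real m * x\<bar> \<le> C"
  shows "x = 0"
proof (rule ccontr)
  assume "x \<noteq> 0"
  obtain m :: nat where "C / \<bar>x\<bar> < real m"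
    using reals_Archimedean2 by blast
  with \<open>x \<noteq> 0\<close> have "C < \<bar>real m * x\<bar>"
    by (simp add: field_simps abs_mult)
  with assms[of m] show False
    by simp
qed

lemma has_slope_unique: "has_slope f w A \<Longrightarrow> has_slope f w B \<Longrightarrow> A = B"
proof -
  assume "has_slope f w A" "has_slope f w B"
  then obtain C1 C2 where "\<And>m. \<bar>f (npow w m) - real m * A\<bar> \<le> C1"
    and "\<And>m. \<bar>f (npow w m) - real m * B\<bar> \<le> C2"
    by (auto simp: has_slope_def)
  then have "\<bar>real m * (A - B)\<bar> \<le> C1 + C2" for m
    unfolding abs_le_iff by (smt (verit) right_diff_distrib)
  then show "A = B"
    using bounded_multiples_eq_0[of "A - B" "C1 + C2"] by simp
qed

lemma homogenization_eqI:
  assumes "has_slope f w A"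
  shows "homogenization f w = A"
  unfolding homogenization_def
proof (rule limI)
  obtain C where C: "\<And>m. \<bar>f (npow w m) - real m * A\<bar> \<le> C"
    using assms by (auto simp: has_slope_def)
  have "(\<lambda>m. (f (npow w m) - real m * A) / real m) \<longlonglongrightarrow> 0"
  proof (rule tendsto_0_le[OF lim_const_over_n[of 1]])
    show "\<forall>\<^sub>F m in sequentially. norm ((f (npow w m) - real m * A) / real m) \<le> norm (1 / real m) * C"
      using C by (auto simp: divide_simps)
  qed
  then have "(\<lambda>m. A + (f (npow w m) - real m * A) / real m) \<longlonglongrightarrow> A"
    using tendsto_add[OF tendsto_const] by fastforce
  moreover have "\<forall>\<^sub>F m in sequentially. A + (f (npow w m) - real m * A) / real m = f (npow w m) / real m"
    using eventually_gt_at_top[of 0] by eventually_elim (simp add: field_simps)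
  ultimately show "(\<lambda>m. f (npow w m) / real m) \<longlonglongrightarrow> A"
    by (rule Lim_transform_eventually)
qed

lemma additive_npow:
  assumes "\<And>x y. E (mul_fg2 x y) = E x + E y"
  shows "E (npow x m) = real m * E x"
proof -
  have "E one_fg2 = 0"
    using assms[of one_fg2 one_fg2] by simp
  then show ?thesis
    by (induction m) (simp_all add: npow_def assms algebra_simps)
qed

definition slope_defect :: "(fg2 \<Rightarrow> real) \<Rightarrow> int \<Rightarrow> (fg2 \<Rightarrow> real) \<Rightarrow> bool" where
  "slope_defect f n E \<longleftrightarrow> (\<forall>x y. E (mul_fg2 x y) = E x + E y) \<and>
     (\<forall>w A B. has_slope f w A \<longrightarrow> has_slope f (tau n w) B \<longrightarrow> B - A = E w)"

lemma slope_defect_zero_if_homogenization_invariant: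
  assumes "act_tau n (homogenization f) = homogenization f"
  shows "slope_defect f n (\<lambda>_. 0)"
  using assms by (auto simp: slope_defect_def act_tau_fixed_iff dest!: homogenization_eqI)

lemma slope_defect_if_same_bounded_class:
  assumes "same_bounded_class (act_tau n f) f"
  shows "\<exists>E. slope_defect f n E"
proof -
  obtain u C0 where u: "\<And>x. \<bar>u x\<bar> \<le> C0"
    and cob: "\<And>g h. coboundary (act_tau n f) g h - coboundary f g h = coboundary u g h"
    using assms unfolding same_bounded_class_def by blast
  define E where "E y = f (tau n y) - f y + u (tau n y)" for y
  have "E (mul_fg2 x y) = E x + E y" for x y
    using cob[of "tau n x" "tau n y"]
    by (simp add: E_def coboundary_def act_tau_eq tau_inverse tau_mul)
  moreover have "B - A = E w" if hA: "has_slope f w A" and hB: "has_slope f (tau n w) B" for w A B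
  proof -
    obtain C1 where C1: "\<And>m. \<bar>f (npow w m) - real m * A\<bar> \<le> C1"
      using hA by (auto simp: has_slope_def)
    have "\<bar>f (npow (tau n w) m) - real m * (A + E w)\<bar> \<le> C1 + C0" for m
    proof -
      have "f (npow (tau n w) m) = f (npow w m) + real m * E w - u (tau n (npow w m))"
        using additive_npow[of E w m, OF calculation] by (simp add: E_def tau_npow)
      then show ?thesis
        using C1[of m] u[of "tau n (npow w m)"] unfolding abs_le_iff by (simp add: algebra_simps)
    qed
    then have "has_slope f (tau n w) (A + E w)"
      by (auto simp: has_slope_def)
    then show ?thesis
      using has_slope_unique hB by fastforce
  qed
  ultimately show ?thesis
    unfolding slope_defect_def by blast
qed

lemma reduced_append:
  "reduced (xs @ ys) \<longleftrightarrow>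
     reduced xs \<and> reduced ys \<and> (xs \<noteq> [] \<longrightarrow> ys \<noteq> [] \<longrightarrow> fst (last xs) \<noteq> fst (hd ys))"
proof (induction xs rule: reduced.induct)
  case (2 g k)
  then show ?case
    by (cases ys rule: reduced.cases) auto
qed auto

definition cyclically_reduced :: "(bool \<times> int) list \<Rightarrow> bool" where
  "cyclically_reduced P \<longleftrightarrow> reduced P \<and> P \<noteq> [] \<and> fst (last P) \<noteq> fst (hd P)"

lemma reduced_concat_replicate:
  assumes "cyclically_reduced P"
  shows "reduced (concat (replicate m P))"
proof (induction m)
  case (Suc m)
  with assms show ?case
    by (cases m) (auto simp: cyclically_reduced_def reduced_append)
qed simp

lemma Rep_npow_cyclically_reduced:
  assumes "Rep_fg2 c = P" "cyclically_reduced P"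
  shows "Rep_fg2 (npow c m) = concat (replicate m P)"
proof (induction m)
  case (Suc m)
  have "Rep_fg2 (npow c (Suc m)) = mul_list P (concat (replicate m P))"
    by (simp add: npow_def Rep_mul_fg2 assms(1) Suc [unfolded npow_def])
  also have "\<dots> = concat (replicate (Suc m) P)"
    using reduced_concat_replicate[OF assms(2), of "Suc m"] by (simp add: mul_list_reduced)
  finally show ?case .
qed (simp add: npow_def one_fg2.rep_eq)

lemma syl_sum_concat_replicate:
  "syl_sum fA fB (concat (replicate m P)) = real m * syl_sum fA fB P"
  by (induction m) (simp_all add: syl_sum_append algebra_simps)

lemma has_slope_cyclically_reduced:
  "Rep_fg2 c = P \<Longrightarrow> cyclically_reduced P \<Longrightarrow> has_slope (split_qm fA fB) c (syl_sum fA fB P)"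
  by (auto simp: has_slope_def split_qm_eq_syl_sum Rep_npow_cyclically_reduced syl_sum_concat_replicate)

lemma has_slope_zero_if_bounded: "(\<And>m. \<bar>f (npow w m)\<bar> \<le> C) \<Longrightarrow> has_slope f w 0"
  by (auto simp: has_slope_def)

text \<open>Each test word \<open>b\<close>, \<open>a\<^sup>-\<^sup>n b\<close>, \<open>a\<^sup>k b\<^sup>j\<^sup>+\<^sup>1\<close> and its \<open>\<tau>\<^sub>n\<close>-image is either cyclically
  reduced, so that its slope is read off from one period, or a power of a generator, with
  slope \<open>0\<close> by boundedness.\<close>

lemma slope_defect_split_qm_equations:
  fixes fA fB :: "int \<Rightarrow> real"
  assumes n0: "n \<noteq> 0" and A0: "fA 0 = 0" and B0: "fB 0 = 0"
    and CA: "\<And>k. \<bar>fA k\<bar> \<le> CA" and CB: "\<And>k. \<bar>fB k\<bar> \<le> CB"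
    and E: "slope_defect (split_qm fA fB) n E"
  shows "fA n + fB 1 = E (bpow 1)"
    and "- (fA (- n) + fB 1) = E (bpow 1)"
    and "k \<noteq> 0 \<Longrightarrow> k + n \<noteq> 0 \<Longrightarrow>
      fA (k + n) + fB 1 + real j * (fA n + fB 1) - (fA k + fB (int (Suc j))) = real (Suc j) * E (bpow 1)"
proof -
  let ?f = "split_qm fA fB"
  let ?P = "[(False, n), (True, 1)]"
  have E_add: "E (mul_fg2 x y) = E x + E y" for x y
    using E by (simp add: slope_defect_def)
  have defect: "B - A = E w" if "has_slope ?f w A" "has_slope ?f (tau n w) B" for w A B
    using E that by (simp add: slope_defect_def)
  have Rep_ab: "Rep_fg2 (mul_fg2 (apow k) (bpow l)) = [(False, k), (True, l)]" if "k \<noteq> 0" "l \<noteq> 0" for k l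
    using that by (simp add: Rep_mul_fg2 apow.rep_eq bpow.rep_eq)
  have cyc_ab: "cyclically_reduced [(False, k), (True, l)]" if "k \<noteq> 0" "l \<noteq> 0" for k l
    using that by (simp add: cyclically_reduced_def)
  have slope_apow: "has_slope ?f (apow k) 0" for k
    using CA CA[of 0] A0 npow_additive[OF apow_add, of k]
    by (intro has_slope_zero_if_bounded[where C = CA]) (simp add: split_qm_eq_syl_sum apow.rep_eq)
  have slope_bpow: "has_slope ?f (bpow 1) 0"
    using CB CB[of 0] B0 npow_additive[OF bpow_add, of 1]
    by (intro has_slope_zero_if_bounded[where C = CB]) (simp add: split_qm_eq_syl_sum bpow.rep_eq)
  have E_apow: "E (apow k) = 0" for k
    using defect[of "apow k" 0 0] slope_apow by simp
  have E_bpow: "E (bpow (int j)) = real j * E (bpow 1)" for j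
    using additive_npow[OF E_add, of "bpow 1" j] npow_additive[OF bpow_add, of 1 j] by simp
  have Rep_tau_b: "Rep_fg2 (mul_fg2 (apow n) (bpow 1)) = ?P"
    using Rep_ab[OF n0, of 1] by simp
  have cyc_P: "cyclically_reduced ?P"
    using cyc_ab[OF n0, of 1] by simp
  show "fA n + fB 1 = E (bpow 1)"
    using defect[OF slope_bpow] has_slope_cyclically_reduced[OF Rep_tau_b cyc_P] by simp
  have "has_slope ?f (mul_fg2 (apow (- n)) (bpow 1)) (fA (- n) + fB 1)"
    using has_slope_cyclically_reduced[OF Rep_ab[of "- n" 1] cyc_ab[of "- n" 1]] n0 by simp
  moreover have "tau n (mul_fg2 (apow (- n)) (bpow 1)) = bpow 1"
    by (simp add: tau_mul flip: mul_fg2_assoc apow_add)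
  ultimately show "- (fA (- n) + fB 1) = E (bpow 1)"
    using defect[of "mul_fg2 (apow (- n)) (bpow 1)" "fA (- n) + fB 1" 0] slope_bpow by (simp add: E_add E_apow)
  assume k: "k \<noteq> 0" "k + n \<noteq> 0"
  define P' where "P' = (False, k + n) # (True, 1) # concat (replicate j ?P)"
  have "Rep_fg2 (tau n (mul_fg2 (apow k) (bpow (int (Suc j))))) = cons_syl (False, k) (concat (replicate (Suc j) ?P))"
    using Rep_npow_cyclically_reduced[OF Rep_tau_b cyc_P, of "Suc j"] k
    by (simp add: tau_mul Rep_mul_fg2 apow.rep_eq ipow_def del: replicate.simps of_nat_Suc)
  then have Rep_tau_w: "Rep_fg2 (tau n (mul_fg2 (apow k) (bpow (int (Suc j))))) = P'"
    using k by (simp add: P'_def)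
  have "last P' = (True, 1)"
    unfolding P'_def by (induction j) auto
  then have cyc_P': "cyclically_reduced P'"
    using Rep_tau_w reduced_Rep_fg2 by (metis P'_def cyclically_reduced_def fst_conv list.sel(1) list.simps(3))
  show "fA (k + n) + fB 1 + real j * (fA n + fB 1) - (fA k + fB (int (Suc j))) = real (Suc j) * E (bpow 1)"
    using defect[OF has_slope_cyclically_reduced[OF Rep_ab[of k "int (Suc j)"] cyc_ab[of k "int (Suc j)"]]
        has_slope_cyclically_reduced[OF Rep_tau_w cyc_P']] k
    by (simp add: P'_def syl_sum_concat_replicate E_add E_apow E_bpow del: of_nat_Suc)
qed

lemma alternating_zero: "alternating h \<Longrightarrow> h 0 = 0"
  unfolding alternating_def by (metis add.inverse_neutral equal_neg_zero)

lemma periodic_and_vanishing_if_slope_equations: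
  fixes fA fB :: "int \<Rightarrow> real"
  assumes altA: "alternating fA" and altB: "alternating fB"
    and CA: "\<And>k. \<bar>fA k\<bar> \<le> CA" and n0: "n \<noteq> 0"
    and e_b: "fA n + fB 1 = \<beta>" and e_ab: "- (fA (- n) + fB 1) = \<beta>"
    and e_abj: "\<And>k j. k \<noteq> 0 \<Longrightarrow> k + n \<noteq> 0 \<Longrightarrow>
      fA (k + n) + fB 1 + real j * (fA n + fB 1) - (fA k + fB (int (Suc j))) = real (Suc j) * \<beta>"
  shows "(\<forall>k. fA (k + n) = fA k) \<and> (\<forall>k. fB k = 0)"
proof -
  have fA_neg: "fA (- k) = - fA k" and fB_neg: "fB (- k) = - fB k" for k
    using altA altB by (simp_all add: alternating_def)
  have "fA 0 = 0" "fB 0 = 0"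
    using altA altB by (simp_all add: alternating_zero)
  have "fB 1 = 0" and \<beta>: "\<beta> = fA n"
    using e_b e_ab fA_neg[of n] by auto
  then have add_n: "fA (k + n) = fA k + fA n" if "k \<noteq> 0" "k + n \<noteq> 0" for k
    using e_abj[OF that, of 0] by simp
  have mult_n: "fA (int (Suc i) * n) = real (Suc i) * fA n" for i
  proof (induction i)
    case (Suc i)
    have "int (Suc i) * n \<noteq> 0" "int (Suc i) * n + n \<noteq> 0"
      using n0 by (simp_all add: algebra_simps del: of_nat_Suc) (smt (verit) mult_eq_0_iff of_nat_0_le_iff mult_le_0_iff)
    then show ?case
      using add_n[of "int (Suc i) * n"] Suc by (simp add: algebra_simps)
  qed simp
  have "\<bar>real m * fA n\<bar> \<le> CA" for m
    using mult_n[of "m - 1"] CA[of "int m * n"] CA[of 0] \<open>fA 0 = 0\<close> by (cases m) simp_all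
  then have "fA n = 0"
    by (rule bounded_multiples_eq_0)
  then have period: "fA (k + n) = fA k" for k
    using add_n[of k] \<open>fA 0 = 0\<close> fA_neg[of n] by (cases "k = 0 \<or> k = - n") auto
  have "fB (int (Suc j)) = 0" for j
    using e_abj[of n j] n0 period[of n] \<open>fA n = 0\<close> \<open>fB 1 = 0\<close> \<beta> by simp
  with \<open>fB 0 = 0\<close> have fB_nat: "fB (int m) = 0" for m
    by (cases m) simp_all
  have "fB k = 0" for k
  proof (cases "0 \<le> k")
    case False
    then have "fB k = - fB (int (nat (- k)))"
      using fB_neg[of "int (nat (- k))"] by simp
    then show ?thesis
      by (simp only: fB_nat)
  qed (metis nat_0_le fB_nat)
  with period show ?thesis
    by blast
qed

lemma periodic_iff_shift: "periodic h (nat \<bar>n\<bar>) \<longleftrightarrow> (\<forall>k. h (k + n) = h k)"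
proof (cases "0 \<le> n")
  case False
  then have "int (nat \<bar>n\<bar>) = - n"
    by simp
  then show ?thesis
    unfolding periodic_def by (metis add.commute add_diff_cancel_left' diff_conv_add_uminus)
qed (simp add: periodic_def)

lemma split_qm_periodic_if_slope_defect:
  fixes fA fB :: "int \<Rightarrow> real"
  assumes "alternating fA" "alternating fB"
    and "\<exists>C. \<forall>k. \<bar>fA k\<bar> \<le> C" "\<exists>C. \<forall>k. \<bar>fB k\<bar> \<le> C"
    and "n \<noteq> 0" and "slope_defect (split_qm fA fB) n E"
  shows "periodic fA (nat \<bar>n\<bar>) \<and> (\<forall>k. fB k = 0)"
proof -
  obtain CA CB where CA: "\<And>k. \<bar>fA k\<bar> \<le> CA" and CB: "\<And>k. \<bar>fB k\<bar> \<le> CB"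
    using assms(3,4) by blast
  have "fA 0 = 0" "fB 0 = 0"
    using assms(1,2) by (simp_all add: alternating_zero)
  note eqs = slope_defect_split_qm_equations[OF assms(5) this CA CB assms(6)]
  show ?thesis
    using periodic_and_vanishing_if_slope_equations[OF assms(1,2) CA assms(5) eqs(1,2) eqs(3)]
    by (simp add: periodic_iff_shift)
qed

lemma act_tau_split_qm_if_periodic:
  assumes "n \<noteq> 0" and "alternating fA" and "periodic fA (nat \<bar>n\<bar>)" and "\<forall>k. fB k = 0"
  shows "act_tau n (split_qm fA fB) = split_qm fA fB"
proof -
  have "fB = (\<lambda>_. 0)"
    using assms(4) by blast
  moreover have "fA 0 = 0"
    using assms(2) by (rule alternating_zero)
  ultimately show ?thesis
    using split_qm_tau[OF assms(1)] assms(3) by (simp add: act_tau_fixed_iff periodic_iff_shift)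
qed

lemma act_tau_homogenization:
  assumes "act_tau n f = f"
  shows "act_tau n (homogenization f) = homogenization f"
  using assms by (simp add: act_tau_fixed_iff homogenization_def flip: tau_npow)

lemma same_bounded_class_refl: "same_bounded_class f f"
  unfolding same_bounded_class_def coboundary_def by (intro exI[of _ "\<lambda>_. 0"]) auto

lemma periodic_mod: "periodic h p \<Longrightarrow> h (k mod int p) = h k"
proof -
  assume p: "periodic h p"
  have "h (r + int p * q) = h r" for r q
  proof (induction q rule: int_induct[where k = 0])
    case (step1 i)
    then show ?case
      using p[unfolded periodic_def, rule_format, of "r + int p * i"] by (simp add: algebra_simps)
  next
    case (step2 i)
    then show ?case
      using p[unfolded periodic_def, rule_format, of "r + int p * (i - 1)"] by (simp add: algebra_simps)
  qed simp
  from this[of "k mod int p" "k div int p"] show ?thesis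
    by simp
qed

lemma alternating_periodic_small_period:
  assumes "alternating h" and "periodic h p" and "0 < p" and "p \<le> 2"
  shows "h k = 0"
proof -
  have h0: "h 0 = 0"
    using assms(1) by (rule alternating_zero)
  have h1: "h (- 1) = - h 1"
    using assms(1) unfolding alternating_def by (rule allE)
  consider "p = 1" | "p = 2"
    using assms(3,4) by linarith
  then show ?thesis
  proof cases
    case 1
    then show ?thesis
      using periodic_mod[OF assms(2), of k] h0 by simp
  next
    case 2
    have "h (- 1) = h 1"
      using periodic_mod[OF assms(2), of "- 1"] 2 by simp
    then have "h 1 = 0"
      using h1 by simp
    moreover have "k mod 2 = 0 \<or> k mod 2 = 1"
      by auto
    ultimately show ?thesis
      using periodic_mod[OF assms(2), of k] h0 2 by auto
  qed
qed

lemma split_qm_eq_0_if_short_period: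
  assumes "alternating fA" and "n \<noteq> 0" and "\<bar>n\<bar> \<le> 2"
    and "periodic fA (nat \<bar>n\<bar>) \<and> (\<forall>k. fB k = 0)"
  shows "split_qm fA fB = (\<lambda>_. 0)"
proof -
  have "fA = (\<lambda>_. 0)" "fB = (\<lambda>_. 0)"
    using alternating_periodic_small_period[OF assms(1)] assms(2-4) by (auto simp: fun_eq_iff)
  moreover have "split_qm (\<lambda>_. 0) (\<lambda>_. 0) x = 0" for x
    by (simp add: split_qm_def case_prod_unfold)
  ultimately show ?thesis
    by (intro ext) simp
qed

theorem theorem3p20:
  fixes fA fB :: "int \<Rightarrow> real" and n :: int
  assumes altA: "alternating fA" and altB: "alternating fB"
    and bdA: "\<exists>C. \<forall>k. \<bar>fA k\<bar> \<le> C" and bdB: "\<exists>C. \<forall>k. \<bar>fB k\<bar> \<le> C"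
    and n0: "n \<noteq> 0"
  defines "f \<equiv> split_qm fA fB"
  shows "(act_tau n f = f \<longleftrightarrow> act_tau n (homogenization f) = homogenization f)
       \<and> (act_tau n (homogenization f) = homogenization f \<longleftrightarrow> same_bounded_class (act_tau n f) f)
       \<and> (same_bounded_class (act_tau n f) f \<longleftrightarrow> periodic fA (nat \<bar>n\<bar>) \<and> (\<forall>k. fB k = 0))
       \<and> (\<bar>n\<bar> \<le> 2 \<longrightarrow> act_tau n f = f \<longrightarrow> f = (\<lambda>_. 0))"
proof -
  let ?iv = "periodic fA (nat \<bar>n\<bar>) \<and> (\<forall>k. fB k = 0)"
  have iv_i: "act_tau n f = f" if ?iv
    using act_tau_split_qm_if_periodic[OF n0 altA] that by (simp add: f_def)
  have ii_iv: ?iv if "act_tau n (homogenization f) = homogenization f"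
    using split_qm_periodic_if_slope_defect[OF altA altB bdA bdB n0]
      slope_defect_zero_if_homogenization_invariant[OF that] by (simp add: f_def)
  have iii_iv: ?iv if "same_bounded_class (act_tau n f) f"
    using split_qm_periodic_if_slope_defect[OF altA altB bdA bdB n0]
      slope_defect_if_same_bounded_class[OF that] by (auto simp: f_def)
  have small: "f = (\<lambda>_. 0)" if "\<bar>n\<bar> \<le> 2" "act_tau n f = f"
  proof -
    have "same_bounded_class (act_tau n f) f"
      using same_bounded_class_refl[of f] that(2) by simp
    from iii_iv[OF this] show ?thesis
      using split_qm_eq_0_if_short_period[OF altA n0 that(1)] by (simp add: f_def)
  qed
  show ?thesis
    using iv_i ii_iv iii_iv small act_tau_homogenization same_bounded_class_refl by metis
qed

end
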